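(* Let $b(r)$ be a smooth positive function on an open interval of $r>0$ and consider the metric $ds^2=-b^2dt^2+b^{-2}dr^2+r^2(d\theta^2+\sin^2\theta\,d\phi^2)$. Let $\kappa_1,\kappa_2,q$ be constants, set $\Lambda=-\kappa_1$, $\lambda=-\kappa_2$, and let $$K_{kl}=\kappa_2r^2\,u_ku_l+(\kappa_1+2\kappa_2r^2)g_{kl}-\kappa_2r^2\,\chi_k\chi_l,\qquad T_{kl}=\frac{q^2}{r^4}\left(2u_ku_l-2\chi_k\chi_l+g_{kl}\right).$$ Then the conformal Killing gravity field equations $R_{kl}-\tfrac12Rg_{kl}=T_{kl}+K_{kl}$ hold if and only if there is a constant $M$ such that $$b^2(r)=1-\frac{2M}{r}-\frac{\Lambda}{3}r^2+\frac{q^2}{r^2}-\frac{\lambda}{5}r^4 .$$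
   Context: $u_k$ is the unit timelike covector with components $u_0=-b$ and all others zero; $\chi_k$ is the unit radial covector with $\chi_r=1/b$ and all others zero. $R_{kl}$ is the Ricci tensor and $R$ the scalar curvature. $T_{kl}$ is the stress-energy tensor of linear electrodynamics (Lagrangian $\mathscr L(F)=F$) with Coulomb electric field $\mathbb E=q_e/r^2$ and monopole magnetic field $\mathbb B=q_m/r^2$, $q^2=q_e^2+q_m^2$, i.e. $T_{kl}=2(\mathbb E^2+\mathbb B^2)(u_ku_l-\chi_k\chi_l)+(\mathbb E^2+\mathbb B^2)g_{kl}$. $K_{kl}$ is the divergence-free conformal Killing tensor $\mathsf Au_ku_l+\mathsf Bg_{kl}+\mathsf C\chi_k\chi_l$ with $\mathsf A=\kappa_2 r^2-2\kappa_3b^2$, $\mathsf B=\kappa_1+2\kappa_2r^2+\kappa_3b^2$, $\mathsf C=-\kappa_2r^2$, specialized to $\kappa_3=0$ (the case $h=bf_1=1$). *)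

theory Defs
  imports "HOL-Analysis.Analysis"
begin

text \<open>Coordinates on spacetime: x$0 = t, x$1 = r, x$2 = theta, x$3 = phi.
  A metric is a matrix-valued function of the coordinates.\<close>

type_synonym pt = "real^4"
type_synonym metric = "pt \<Rightarrow> real^4^4"

definition pd :: "4 \<Rightarrow> (pt \<Rightarrow> real) \<Rightarrow> pt \<Rightarrow> real" where
  "pd i F x = deriv (\<lambda>s. F (x + s *\<^sub>R axis i 1)) 0"

definition ginv :: "metric \<Rightarrow> pt \<Rightarrow> 4 \<Rightarrow> 4 \<Rightarrow> real" where
  "ginv g x i j = matrix_inv (g x) $ i $ j"

definition christoffel :: "metric \<Rightarrow> pt \<Rightarrow> 4 \<Rightarrow> 4 \<Rightarrow> 4 \<Rightarrow> real" where
  "christoffel g x k i j = (1/2) * (\<Sum>l\<in>UNIV. ginv g x k l *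
      (pd i (\<lambda>y. g y $ l $ j) x + pd j (\<lambda>y. g y $ l $ i) x - pd l (\<lambda>y. g y $ i $ j) x))"

definition ricci :: "metric \<Rightarrow> pt \<Rightarrow> 4 \<Rightarrow> 4 \<Rightarrow> real" where
  "ricci g x i j =
     (\<Sum>k\<in>UNIV. pd k (\<lambda>y. christoffel g y k i j) x - pd j (\<lambda>y. christoffel g y k i k) x)
   + (\<Sum>k\<in>UNIV. \<Sum>l\<in>UNIV. christoffel g x k k l * christoffel g x l i j
                          - christoffel g x k j l * christoffel g x l i k)"

definition scalar_curv :: "metric \<Rightarrow> pt \<Rightarrow> real" where
  "scalar_curv g x = (\<Sum>i\<in>UNIV. \<Sum>j\<in>UNIV. ginv g x i j * ricci g x i j)"

definition sss_metric :: "(real \<Rightarrow> real) \<Rightarrow> metric" where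
  "sss_metric b x = (\<chi> i j. if i \<noteq> j then 0
      else if i = 0 then - (b (x$1))\<^sup>2
      else if i = 1 then 1 / (b (x$1))\<^sup>2
      else if i = 2 then (x$1)\<^sup>2
      else (x$1)\<^sup>2 * (sin (x$2))\<^sup>2)"

text \<open>Unit timelike covector u (u_0 = -b) and unit radial covector chi (chi_r = 1/b).\<close>
definition ucov :: "(real \<Rightarrow> real) \<Rightarrow> pt \<Rightarrow> 4 \<Rightarrow> real" where
  "ucov b x k = (if k = 0 then - b (x$1) else 0)"

definition chicov :: "(real \<Rightarrow> real) \<Rightarrow> pt \<Rightarrow> 4 \<Rightarrow> real" where
  "chicov b x k = (if k = 1 then 1 / b (x$1) else 0)"

definition Ktens :: "real \<Rightarrow> real \<Rightarrow> (real \<Rightarrow> real) \<Rightarrow> pt \<Rightarrow> 4 \<Rightarrow> 4 \<Rightarrow> real" where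
  "Ktens \<kappa>1 \<kappa>2 b x k l =
     \<kappa>2 * (x$1)\<^sup>2 * ucov b x k * ucov b x l
   + (\<kappa>1 + 2 * \<kappa>2 * (x$1)\<^sup>2) * sss_metric b x $ k $ l
   - \<kappa>2 * (x$1)\<^sup>2 * chicov b x k * chicov b x l"

definition Ttens :: "real \<Rightarrow> (real \<Rightarrow> real) \<Rightarrow> pt \<Rightarrow> 4 \<Rightarrow> 4 \<Rightarrow> real" where
  "Ttens q b x k l = q\<^sup>2 / (x$1) ^ 4 *
     (2 * ucov b x k * ucov b x l - 2 * chicov b x k * chicov b x l + sss_metric b x $ k $ l)"

end

theory Submission
  imports Defs
begin

text \<open>In terms of the mass function
  \<open>m(r) = (r - r b\<^sup>2 + \<kappa>1 r\<^sup>3/3 + q\<^sup>2/r + \<kappa>2 r\<^sup>5/5) / 2\<close> the residual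
  \<open>G\<^sub>k\<^sub>l - T\<^sub>k\<^sub>l - K\<^sub>k\<^sub>l\<close> is \<open>-g\<^sub>k\<^sub>l \<cdot> 2m'/r\<^sup>2\<close> for the \<open>t\<close>- and \<open>r\<close>-components and
  \<open>-g\<^sub>k\<^sub>l \<cdot> m''/r\<close> for the angular ones. So the field equations say \<open>m' = m'' = 0\<close> on \<open>I\<close>;
  as \<open>I\<close> is open, \<open>m' = 0\<close> already forces \<open>m'' = 0\<close>, and as \<open>I\<close> is an interval, \<open>m' = 0\<close>
  means \<open>m \<equiv> M\<close>, which is the claimed form of \<open>b\<^sup>2\<close>.\<close>

lemma pd_function_of_r_theta:
  fixes F :: "pt \<Rightarrow> real" and H :: "real \<Rightarrow> real \<Rightarrow> real"
  assumes near_x: "\<forall>\<^sub>F z in nhds x. F z = H (z$1) (z$2)"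
    and dr: "((\<lambda>r. H r (x$2)) has_real_derivative Dr) (at (x$1))"
    and dtheta: "((\<lambda>\<theta>. H (x$1) \<theta>) has_real_derivative D\<theta>) (at (x$2))"
  shows "pd i F x = (if i = 1 then Dr else if i = 2 then D\<theta> else 0)"
proof -
  let ?H = "\<lambda>s. H (x$1 + (if i = 1 then s else 0)) (x$2 + (if i = 2 then s else 0))"
  have "((\<lambda>s::real. x + s *\<^sub>R axis i 1) \<longlongrightarrow> x) (nhds 0)"
    by (auto intro!: tendsto_eq_intros filterlim_ident)
  then have "\<forall>\<^sub>F s in nhds 0. F (x + s *\<^sub>R axis i 1)
      = H ((x + s *\<^sub>R axis i 1)$1) ((x + s *\<^sub>R axis i 1)$2)"
    using filterlim_iff[THEN iffD1, rule_format, OF _ near_x] by blast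
  then have "\<forall>\<^sub>F s in nhds 0. F (x + s *\<^sub>R axis i 1) = ?H s"
    by (rule eventually_mono) (simp add: axis_def)
  then have "pd i F x = deriv ?H 0"
    unfolding pd_def by (rule deriv_cong_ev) simp
  moreover have "(?H has_real_derivative (if i = 1 then Dr else if i = 2 then D\<theta> else 0)) (at 0)"
    using dr dtheta DERIV_shift[of _ _ 0 "x$1"] DERIV_shift[of _ _ 0 "x$2"]
    by (auto simp: add.commute)
  ultimately show ?thesis by (simp add: DERIV_imp_deriv)
qed

lemma matrix_inv_unique:
  fixes A :: "'a::semiring_1^'n^'m"
  assumes "A ** B = mat 1" and "B ** A = mat 1"
  shows "matrix_inv A = B"
proof -
  have inv: "A ** matrix_inv A = mat 1 \<and> matrix_inv A ** A = mat 1"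
    unfolding matrix_inv_def by (rule someI[of _ B]) (use assms in simp)
  have "matrix_inv A = matrix_inv A ** (A ** B)" using assms by simp
  also have "\<dots> = B" using inv by (simp add: matrix_mul_assoc)
  finally show ?thesis .
qed

definition diag_mat :: "('n \<Rightarrow> 'a::zero) \<Rightarrow> 'a^'n^'n" where
  "diag_mat d = (\<chi> i j. if i = j then d i else 0)"

lemma diag_mat_mult: "diag_mat d ** diag_mat e = diag_mat (\<lambda>i. d i * e i :: 'a::semiring_1)"
proof -
  have "(if i = k then d i else 0) * (if k = j then e k else 0)
        = (if k = i then (if i = j then d i * e i else 0) else 0)" for i j k
    by auto
  then show ?thesis by (simp add: diag_mat_def matrix_matrix_mult_def vec_eq_iff)
qed

lemma matrix_inv_diag_mat:
  assumes "\<And>i. d i \<noteq> 0"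
  shows "matrix_inv (diag_mat d) = diag_mat (\<lambda>i. inverse (d i) :: 'a::field)"
  by (rule matrix_inv_unique) (simp_all add: diag_mat_mult assms, simp_all add: diag_mat_def mat_def)

lemma deriv_zero_iff_constant_on_interval:
  fixes f :: "real \<Rightarrow> real"
  assumes "open S" "is_interval S" "\<And>x. x \<in> S \<Longrightarrow> (f has_real_derivative f' x) (at x)"
  shows "(\<forall>x\<in>S. f' x = 0) \<longleftrightarrow> (\<exists>c. \<forall>x\<in>S. f x = c)"
proof
  assume "\<forall>x\<in>S. f' x = 0"
  then show "\<exists>c. \<forall>x\<in>S. f x = c"
    using assms by (intro has_field_derivative_zero_constant)
      (auto simp: is_interval_convex has_field_derivative_at_within)
next
  assume "\<exists>c. \<forall>x\<in>S. f x = c"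
  then obtain c where c: "\<And>x. x \<in> S \<Longrightarrow> f x = c" by blast
  show "\<forall>x\<in>S. f' x = 0"
  proof
    fix x assume "x \<in> S"
    then obtain d where "d > 0" "ball x d \<subseteq> S" using \<open>open S\<close> open_contains_ball by blast
    then have "\<forall>y. \<bar>x - y\<bar> < d \<longrightarrow> f x = f y"
      using \<open>x \<in> S\<close> c by (auto simp: dist_real_def subset_iff)
    then show "f' x = 0" using DERIV_local_const assms(3)[OF \<open>x \<in> S\<close>] \<open>d > 0\<close> by blast
  qed
qed

definition sss_coeff :: "(real \<Rightarrow> real) \<Rightarrow> 4 \<Rightarrow> real \<Rightarrow> real \<Rightarrow> real" where
  "sss_coeff b i r \<theta> =
     (if i = 0 then - (b r)\<^sup>2 else if i = 1 then 1 / (b r)\<^sup>2 else if i = 2 then r\<^sup>2 else r\<^sup>2 * (sin \<theta>)\<^sup>2)"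

definition sss_coeff_dr :: "(real \<Rightarrow> real) \<Rightarrow> 4 \<Rightarrow> real \<Rightarrow> real \<Rightarrow> real" where
  "sss_coeff_dr b i r \<theta> =
     (if i = 0 then - (2 * b r * deriv b r) else if i = 1 then - (2 * deriv b r / (b r)^3)
      else if i = 2 then 2 * r else 2 * r * (sin \<theta>)\<^sup>2)"

definition sss_coeff_dtheta :: "(real \<Rightarrow> real) \<Rightarrow> 4 \<Rightarrow> real \<Rightarrow> real \<Rightarrow> real" where
  "sss_coeff_dtheta b i r \<theta> = (if i = 3 then 2 * r\<^sup>2 * sin \<theta> * cos \<theta> else 0)"

lemma sss_metric_eq_diag_mat: "sss_metric b x = diag_mat (\<lambda>i. sss_coeff b i (x$1) (x$2))"
  by (simp add: sss_metric_def sss_coeff_def diag_mat_def vec_eq_iff)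

lemma sss_coeff_nonzero:
  assumes "b r \<noteq> 0" "r \<noteq> 0" "sin \<theta> \<noteq> 0"
  shows "sss_coeff b i r \<theta> \<noteq> 0"
  using assms by (simp add: sss_coeff_def)

lemma ginv_sss_metric:
  assumes "b (x$1) \<noteq> 0" "x$1 \<noteq> 0" "sin (x$2) \<noteq> 0"
  shows "ginv (sss_metric b) x k l = (if k = l then 1 / sss_coeff b k (x$1) (x$2) else 0)"
proof -
  have "matrix_inv (sss_metric b x) = diag_mat (\<lambda>i. inverse (sss_coeff b i (x$1) (x$2)))"
    unfolding sss_metric_eq_diag_mat using assms by (intro matrix_inv_diag_mat sss_coeff_nonzero)
  then show ?thesis by (simp add: ginv_def diag_mat_def divide_inverse)
qed

lemma has_real_derivative_sss_coeff_r:
  assumes "(b has_real_derivative deriv b r) (at r)" "b r \<noteq> 0"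
  shows "((\<lambda>r. sss_coeff b i r \<theta>) has_real_derivative sss_coeff_dr b i r \<theta>) (at r)"
  using exhaust_4[of i] assms
  by (auto simp: sss_coeff_def sss_coeff_dr_def power2_eq_square power3_eq_cube field_simps
      intro!: derivative_eq_intros)

lemma has_real_derivative_sss_coeff_theta:
  "((\<lambda>\<theta>. sss_coeff b i r \<theta>) has_real_derivative sss_coeff_dtheta b i r \<theta>) (at \<theta>)"
  using exhaust_4[of i]
  by (auto simp: sss_coeff_def sss_coeff_dtheta_def power2_eq_square intro!: derivative_eq_intros)

lemma pd_sss_metric:
  assumes "(b has_real_derivative deriv b (x$1)) (at (x$1))" "b (x$1) \<noteq> 0"
  shows "pd m (\<lambda>z. sss_metric b z $ i $ j) x =
    (if i \<noteq> j then 0 else if m = 1 then sss_coeff_dr b i (x$1) (x$2)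
     else if m = 2 then sss_coeff_dtheta b i (x$1) (x$2) else 0)"
proof -
  have "pd m (\<lambda>z. sss_metric b z $ i $ j) x =
    (if m = 1 then (if i = j then sss_coeff_dr b i (x$1) (x$2) else 0)
     else if m = 2 then (if i = j then sss_coeff_dtheta b i (x$1) (x$2) else 0) else 0)"
    using has_real_derivative_sss_coeff_r[OF assms] has_real_derivative_sss_coeff_theta
    by (intro pd_function_of_r_theta[where H="\<lambda>r \<theta>. if i = j then sss_coeff b i r \<theta> else 0"])
      (auto simp: sss_metric_eq_diag_mat diag_mat_def)
  then show ?thesis by auto
qed

definition sss_christoffel :: "(real \<Rightarrow> real) \<Rightarrow> 4 \<Rightarrow> 4 \<Rightarrow> 4 \<Rightarrow> real \<Rightarrow> real \<Rightarrow> real" where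
  "sss_christoffel b k i j r \<theta> =
    (if k = 0 \<and> (i = 0 \<and> j = 1 \<or> i = 1 \<and> j = 0) then deriv b r / b r
     else if k = 1 \<and> i = 0 \<and> j = 0 then (b r)^3 * deriv b r
     else if k = 1 \<and> i = 1 \<and> j = 1 then - (deriv b r / b r)
     else if k = 1 \<and> i = 2 \<and> j = 2 then - (r * (b r)\<^sup>2)
     else if k = 1 \<and> i = 3 \<and> j = 3 then - (r * (b r)\<^sup>2 * (sin \<theta>)\<^sup>2)
     else if k = 2 \<and> (i = 1 \<and> j = 2 \<or> i = 2 \<and> j = 1) then 1 / r
     else if k = 2 \<and> i = 3 \<and> j = 3 then - (sin \<theta> * cos \<theta>)
     else if k = 3 \<and> (i = 1 \<and> j = 3 \<or> i = 3 \<and> j = 1) then 1 / r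
     else if k = 3 \<and> (i = 2 \<and> j = 3 \<or> i = 3 \<and> j = 2) then cos \<theta> / sin \<theta>
     else 0)"

definition sss_christoffel_dr :: "(real \<Rightarrow> real) \<Rightarrow> 4 \<Rightarrow> 4 \<Rightarrow> 4 \<Rightarrow> real \<Rightarrow> real \<Rightarrow> real" where
  "sss_christoffel_dr b k i j r \<theta> =
    (if k = 0 \<and> (i = 0 \<and> j = 1 \<or> i = 1 \<and> j = 0)
       then (deriv (deriv b) r * b r - (deriv b r)\<^sup>2) / (b r)\<^sup>2
     else if k = 1 \<and> i = 0 \<and> j = 0 then 3 * (b r)\<^sup>2 * (deriv b r)\<^sup>2 + (b r)^3 * deriv (deriv b) r
     else if k = 1 \<and> i = 1 \<and> j = 1 then - ((deriv (deriv b) r * b r - (deriv b r)\<^sup>2) / (b r)\<^sup>2)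
     else if k = 1 \<and> i = 2 \<and> j = 2 then - ((b r)\<^sup>2 + 2 * r * b r * deriv b r)
     else if k = 1 \<and> i = 3 \<and> j = 3 then - (((b r)\<^sup>2 + 2 * r * b r * deriv b r) * (sin \<theta>)\<^sup>2)
     else if k = 2 \<and> (i = 1 \<and> j = 2 \<or> i = 2 \<and> j = 1) then - (1 / r\<^sup>2)
     else if k = 3 \<and> (i = 1 \<and> j = 3 \<or> i = 3 \<and> j = 1) then - (1 / r\<^sup>2)
     else 0)"

definition sss_christoffel_dtheta :: "(real \<Rightarrow> real) \<Rightarrow> 4 \<Rightarrow> 4 \<Rightarrow> 4 \<Rightarrow> real \<Rightarrow> real \<Rightarrow> real" where
  "sss_christoffel_dtheta b k i j r \<theta> =
    (if k = 1 \<and> i = 3 \<and> j = 3 then - (2 * r * (b r)\<^sup>2 * sin \<theta> * cos \<theta>)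
     else if k = 2 \<and> i = 3 \<and> j = 3 then - ((cos \<theta>)\<^sup>2 - (sin \<theta>)\<^sup>2)
     else if k = 3 \<and> (i = 2 \<and> j = 3 \<or> i = 3 \<and> j = 2) then - (1 / (sin \<theta>)\<^sup>2)
     else 0)"

lemma christoffel_sss_metric:
  assumes "(b has_real_derivative deriv b (x$1)) (at (x$1))"
    and "b (x$1) \<noteq> 0" "x$1 \<noteq> 0" "sin (x$2) \<noteq> 0"
  shows "christoffel (sss_metric b) x k i j = sss_christoffel b k i j (x$1) (x$2)"
proof -
  let ?dg = "\<lambda>m i j. if i \<noteq> j then 0 else if m = 1 then sss_coeff_dr b i (x$1) (x$2)
     else if m = 2 then sss_coeff_dtheta b i (x$1) (x$2) else 0"
  have "christoffel (sss_metric b) x k i j = (1/2) * (\<Sum>l\<in>UNIV.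
      (if k = l then 1 / sss_coeff b k (x$1) (x$2) else 0) * (?dg i l j + ?dg j l i - ?dg l i j))"
    using assms by (simp add: christoffel_def ginv_sss_metric pd_sss_metric)
  also have "\<dots> = (1/2) * (1 / sss_coeff b k (x$1) (x$2)) * (?dg i k j + ?dg j k i - ?dg k i j)"
    by (simp add: if_distrib[of "\<lambda>u. u * _"] sum.delta cong: if_cong)
  also have "\<dots> = sss_christoffel b k i j (x$1) (x$2)"
    using exhaust_4[of k] exhaust_4[of i] exhaust_4[of j] assms
    by (elim disjE)
      (simp_all add: sss_christoffel_def sss_coeff_def sss_coeff_dr_def sss_coeff_dtheta_def,
       simp_all add: field_simps power2_eq_square power3_eq_cube)
  finally show ?thesis .
qed

lemma has_real_derivative_sss_christoffel_r:
  assumes "(b has_real_derivative deriv b r) (at r)"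
    and "(deriv b has_real_derivative deriv (deriv b) r) (at r)" and "b r \<noteq> 0" "r \<noteq> 0"
  shows "((\<lambda>r. sss_christoffel b k i j r \<theta>) has_real_derivative sss_christoffel_dr b k i j r \<theta>) (at r)"
  using exhaust_4[of k] exhaust_4[of i] exhaust_4[of j] assms
  by (elim disjE) (simp_all add: sss_christoffel_def sss_christoffel_dr_def,
    auto intro!: derivative_eq_intros assms(1,2) simp: field_simps power2_eq_square power3_eq_cube)

lemma has_real_derivative_sss_christoffel_theta:
  assumes "sin \<theta> \<noteq> 0"
  shows "((\<lambda>\<theta>. sss_christoffel b k i j r \<theta>) has_real_derivative sss_christoffel_dtheta b k i j r \<theta>) (at \<theta>)"
proof -
  have cot: "((\<lambda>\<theta>. cos \<theta> / sin \<theta>) has_real_derivative - (1 / (sin \<theta>)\<^sup>2)) (at \<theta>)"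
    using DERIV_cot[OF assms] by (simp add: cot_def[abs_def] divide_inverse)
  show ?thesis
    using exhaust_4[of k] exhaust_4[of i] exhaust_4[of j]
    by (elim disjE) (simp_all add: sss_christoffel_def sss_christoffel_dtheta_def cot,
      auto intro!: derivative_eq_intros simp: power2_eq_square)
qed

definition sss_ricci :: "(real \<Rightarrow> real) \<Rightarrow> 4 \<Rightarrow> 4 \<Rightarrow> real \<Rightarrow> real \<Rightarrow> real" where
  "sss_ricci b i j r \<theta> =
    (if i \<noteq> j then 0
     else if i = 0 then (b r)\<^sup>2 * ((deriv b r)\<^sup>2 + b r * deriv (deriv b) r + 2 * b r * deriv b r / r)
     else if i = 1 then - (((deriv b r)\<^sup>2 + b r * deriv (deriv b) r + 2 * b r * deriv b r / r) / (b r)\<^sup>2)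
     else if i = 2 then 1 - (b r)\<^sup>2 - 2 * r * b r * deriv b r
     else (sin \<theta>)\<^sup>2 * (1 - (b r)\<^sup>2 - 2 * r * b r * deriv b r))"

definition sss_scalar :: "(real \<Rightarrow> real) \<Rightarrow> real \<Rightarrow> real" where
  "sss_scalar b r =
     - 2 * ((deriv b r)\<^sup>2 + b r * deriv (deriv b) r) - 8 * b r * deriv b r / r + 2 * (1 - (b r)\<^sup>2) / r\<^sup>2"

definition chart_domain :: "real set \<Rightarrow> pt set" where
  "chart_domain I = {z. z$1 \<in> I \<and> 0 < z$2 \<and> z$2 < pi}"

lemma open_chart_domain: "open I \<Longrightarrow> open (chart_domain I)"
  unfolding chart_domain_def
  by (intro open_Collect_conj open_Collect_less continuous_intros
      open_vimage[of I "\<lambda>z. z$1", unfolded vimage_def]) auto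

definition mass_function :: "real \<Rightarrow> real \<Rightarrow> real \<Rightarrow> (real \<Rightarrow> real) \<Rightarrow> real \<Rightarrow> real" where
  "mass_function q \<kappa>1 \<kappa>2 b r = (r - r * (b r)\<^sup>2 + \<kappa>1 / 3 * r ^ 3 + q\<^sup>2 / r + \<kappa>2 / 5 * r ^ 5) / 2"

definition mass_deriv :: "real \<Rightarrow> real \<Rightarrow> real \<Rightarrow> (real \<Rightarrow> real) \<Rightarrow> real \<Rightarrow> real" where
  "mass_deriv q \<kappa>1 \<kappa>2 b r =
     (1 - (b r)\<^sup>2 - 2 * r * b r * deriv b r + \<kappa>1 * r\<^sup>2 - q\<^sup>2 / r\<^sup>2 + \<kappa>2 * r ^ 4) / 2"

definition mass_deriv2 :: "real \<Rightarrow> real \<Rightarrow> real \<Rightarrow> (real \<Rightarrow> real) \<Rightarrow> real \<Rightarrow> real" where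
  "mass_deriv2 q \<kappa>1 \<kappa>2 b r =
     - 2 * b r * deriv b r - r * ((deriv b r)\<^sup>2 + b r * deriv (deriv b) r)
     + \<kappa>1 * r + q\<^sup>2 / r ^ 3 + 2 * \<kappa>2 * r ^ 3"

lemma mass_function_eq_iff:
  assumes "r \<noteq> 0"
  shows "mass_function q \<kappa>1 \<kappa>2 b r = M \<longleftrightarrow>
    (b r)\<^sup>2 = 1 - 2 * M / r + \<kappa>1 / 3 * r\<^sup>2 + q\<^sup>2 / r\<^sup>2 + \<kappa>2 / 5 * r ^ 4"
proof -
  let ?X = "1 - 2 * M / r + \<kappa>1 / 3 * r\<^sup>2 + q\<^sup>2 / r\<^sup>2 + \<kappa>2 / 5 * r ^ 4"
  have "r * ?X = r - 2 * M + \<kappa>1 / 3 * r ^ 3 + q\<^sup>2 / r + \<kappa>2 / 5 * r ^ 5"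
    using assms by (simp add: field_simps eval_nat_numeral)
  then have "(b r)\<^sup>2 = ?X \<longleftrightarrow> r * (b r)\<^sup>2 = r - 2 * M + \<kappa>1 / 3 * r ^ 3 + q\<^sup>2 / r + \<kappa>2 / 5 * r ^ 5"
    using assms by (metis mult_cancel_left)
  then show ?thesis by (auto simp: mass_function_def)
qed

definition field_equations_at :: "real \<Rightarrow> real \<Rightarrow> real \<Rightarrow> (real \<Rightarrow> real) \<Rightarrow> pt \<Rightarrow> bool" where
  "field_equations_at q \<kappa>1 \<kappa>2 b x \<longleftrightarrow>
     (\<forall>k l. ricci (sss_metric b) x k l - 1/2 * scalar_curv (sss_metric b) x * sss_metric b x $ k $ l
            = Ttens q b x k l + Ktens \<kappa>1 \<kappa>2 b x k l)"

locale static_spherical =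
  fixes b :: "real \<Rightarrow> real" and I :: "real set"
  assumes open_I: "open I" and I_pos: "\<And>r. r \<in> I \<Longrightarrow> 0 < r"
    and b_pos: "\<And>r. r \<in> I \<Longrightarrow> 0 < b r"
    and b_deriv: "\<And>r. r \<in> I \<Longrightarrow> (b has_real_derivative deriv b r) (at r)"
    and b_deriv2: "\<And>r. r \<in> I \<Longrightarrow> (deriv b has_real_derivative deriv (deriv b) r) (at r)"
begin

lemma chart_domain_nonzero:
  assumes "x \<in> chart_domain I"
  shows "b (x$1) \<noteq> 0" "x$1 \<noteq> 0" "sin (x$2) \<noteq> 0"
  using assms b_pos I_pos sin_gt_zero[of "x$2"] by (fastforce simp: chart_domain_def)+

lemma christoffel_on_chart:
  "x \<in> chart_domain I \<Longrightarrow> christoffel (sss_metric b) x k i j = sss_christoffel b k i j (x$1) (x$2)"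
  by (intro christoffel_sss_metric b_deriv chart_domain_nonzero) (simp_all add: chart_domain_def)

lemma pd_christoffel:
  assumes "x \<in> chart_domain I"
  shows "pd m (\<lambda>y. christoffel (sss_metric b) y k i j) x =
     (if m = 1 then sss_christoffel_dr b k i j (x$1) (x$2)
      else if m = 2 then sss_christoffel_dtheta b k i j (x$1) (x$2) else 0)"
proof (rule pd_function_of_r_theta[where H="sss_christoffel b k i j"])
  show "\<forall>\<^sub>F y in nhds x. christoffel (sss_metric b) y k i j = sss_christoffel b k i j (y$1) (y$2)"
    using open_chart_domain[OF open_I] assms
    by (rule eventually_nhds_in_open[THEN eventually_mono]) (rule christoffel_on_chart)
  have "x$1 \<in> I" using assms by (simp add: chart_domain_def)
  then show "((\<lambda>r. sss_christoffel b k i j r (x$2)) has_real_derivative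
      sss_christoffel_dr b k i j (x$1) (x$2)) (at (x$1))"
    using chart_domain_nonzero[OF assms]
    by (intro has_real_derivative_sss_christoffel_r b_deriv b_deriv2) auto
  show "((\<lambda>\<theta>. sss_christoffel b k i j (x$1) \<theta>) has_real_derivative
      sss_christoffel_dtheta b k i j (x$1) (x$2)) (at (x$2))"
    using chart_domain_nonzero[OF assms] by (intro has_real_derivative_sss_christoffel_theta)
qed

lemma ricci_on_chart:
  assumes "x \<in> chart_domain I"
  shows "ricci (sss_metric b) x i j = sss_ricci b i j (x$1) (x$2)"
  unfolding ricci_def pd_christoffel[OF assms] christoffel_on_chart[OF assms] sum_4
  using exhaust_4[of i] exhaust_4[of j] chart_domain_nonzero[OF assms]
  by (elim disjE) (simp_all add: sss_christoffel_def sss_christoffel_dr_def sss_christoffel_dtheta_def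
    sss_ricci_def, simp_all add: field_simps power2_eq_square power3_eq_cube)

lemma scalar_curv_on_chart:
  assumes "x \<in> chart_domain I"
  shows "scalar_curv (sss_metric b) x = sss_scalar b (x$1)"
  unfolding scalar_curv_def ricci_on_chart[OF assms] ginv_sss_metric[of b x, OF chart_domain_nonzero[OF assms]]
  using chart_domain_nonzero[OF assms]
  by (simp add: sum_4 sss_ricci_def sss_coeff_def sss_scalar_def,
      simp add: field_simps power2_eq_square power3_eq_cube)

lemma has_real_derivative_mass_function:
  "r \<in> I \<Longrightarrow> (mass_function q \<kappa>1 \<kappa>2 b has_real_derivative mass_deriv q \<kappa>1 \<kappa>2 b r) (at r)"
  unfolding mass_function_def[abs_def] mass_deriv_def
  using I_pos[of r]
  by (auto intro!: derivative_eq_intros b_deriv simp: field_simps eval_nat_numeral)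

lemma has_real_derivative_mass_deriv:
  "r \<in> I \<Longrightarrow> (mass_deriv q \<kappa>1 \<kappa>2 b has_real_derivative mass_deriv2 q \<kappa>1 \<kappa>2 b r) (at r)"
  unfolding mass_deriv_def[abs_def] mass_deriv2_def
  using I_pos[of r]
  by (auto intro!: derivative_eq_intros b_deriv b_deriv2 simp: field_simps eval_nat_numeral)

lemma field_equation_residual:
  assumes "x \<in> chart_domain I"
  shows "ricci (sss_metric b) x k l - 1/2 * scalar_curv (sss_metric b) x * sss_metric b x $ k $ l
      - (Ttens q b x k l + Ktens \<kappa>1 \<kappa>2 b x k l)
    = - sss_metric b x $ k $ l * (if k = 0 \<or> k = 1 then 2 * mass_deriv q \<kappa>1 \<kappa>2 b (x$1) / (x$1)\<^sup>2
                                  else mass_deriv2 q \<kappa>1 \<kappa>2 b (x$1) / x$1)"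
  unfolding ricci_on_chart[OF assms] scalar_curv_on_chart[OF assms] Ttens_def Ktens_def ucov_def chicov_def
    sss_metric_eq_diag_mat
  using exhaust_4[of k] exhaust_4[of l] chart_domain_nonzero[OF assms]
  by (elim disjE) (simp_all add: diag_mat_def sss_ricci_def sss_scalar_def sss_coeff_def
    mass_deriv_def mass_deriv2_def, simp_all add: field_simps eval_nat_numeral)

lemma field_equations_at_iff_mass_derivs:
  assumes "x \<in> chart_domain I"
  shows "field_equations_at q \<kappa>1 \<kappa>2 b x
    \<longleftrightarrow> mass_deriv q \<kappa>1 \<kappa>2 b (x$1) = 0 \<and> mass_deriv2 q \<kappa>1 \<kappa>2 b (x$1) = 0"
proof -
  let ?G = "sss_metric b" and ?r = "x$1"
  let ?c = "\<lambda>k::4. if k = 0 \<or> k = 1 then 2 * mass_deriv q \<kappa>1 \<kappa>2 b ?r / ?r\<^sup>2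
                 else mass_deriv2 q \<kappa>1 \<kappa>2 b ?r / ?r"
  have component_iff: "ricci ?G x k l - 1/2 * scalar_curv ?G x * ?G x $ k $ l
      = Ttens q b x k l + Ktens \<kappa>1 \<kappa>2 b x k l \<longleftrightarrow> - ?G x $ k $ l * ?c k = 0" for k l
    by (subst eq_iff_diff_eq_0) (simp only: field_equation_residual[OF assms])
  have g_nonzero: "?G x $ k $ k \<noteq> 0" for k
    using chart_domain_nonzero[OF assms]
    by (simp add: sss_metric_eq_diag_mat diag_mat_def sss_coeff_nonzero)
  have "?r \<noteq> 0" using chart_domain_nonzero[OF assms] by simp
  show ?thesis
  proof
    assume "field_equations_at q \<kappa>1 \<kappa>2 b x"
    then have "- ?G x $ 0 $ 0 * ?c 0 = 0" "- ?G x $ 2 $ 2 * ?c 2 = 0"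
      using component_iff unfolding field_equations_at_def by blast+
    then show "mass_deriv q \<kappa>1 \<kappa>2 b ?r = 0 \<and> mass_deriv2 q \<kappa>1 \<kappa>2 b ?r = 0"
      using g_nonzero[of 0] g_nonzero[of 2] \<open>?r \<noteq> 0\<close> by simp
  qed (unfold field_equations_at_def component_iff, simp)
qed

lemma field_equations_iff_mass_constant:
  assumes "is_interval I"
  shows "(\<forall>x. x$1 \<in> I \<and> 0 < x$2 \<and> x$2 < pi \<longrightarrow> field_equations_at q \<kappa>1 \<kappa>2 b x)
    \<longleftrightarrow> (\<exists>M. \<forall>r\<in>I. mass_function q \<kappa>1 \<kappa>2 b r = M)"
proof -
  have "(\<forall>x. x$1 \<in> I \<and> 0 < x$2 \<and> x$2 < pi \<longrightarrow> field_equations_at q \<kappa>1 \<kappa>2 b x)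
    \<longleftrightarrow> (\<forall>r\<in>I. mass_deriv q \<kappa>1 \<kappa>2 b r = 0 \<and> mass_deriv2 q \<kappa>1 \<kappa>2 b r = 0)"
  proof (intro iffI ballI allI impI)
    fix r assume equations: "\<forall>x. x$1 \<in> I \<and> 0 < x$2 \<and> x$2 < pi \<longrightarrow> field_equations_at q \<kappa>1 \<kappa>2 b x"
      and "r \<in> I"
    define x :: pt where "x = (\<chi> i. if i = 1 then r else pi / 2)"
    have "x$1 = r" by (simp add: x_def)
    have "x \<in> chart_domain I" using \<open>r \<in> I\<close> pi_gt_zero by (simp add: chart_domain_def x_def)
    with equations show "mass_deriv q \<kappa>1 \<kappa>2 b r = 0 \<and> mass_deriv2 q \<kappa>1 \<kappa>2 b r = 0"
      using field_equations_at_iff_mass_derivs \<open>x$1 = r\<close> by (auto simp: chart_domain_def)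
  qed (use field_equations_at_iff_mass_derivs in \<open>auto simp: chart_domain_def\<close>)
  also have "\<dots> \<longleftrightarrow> (\<forall>r\<in>I. mass_deriv q \<kappa>1 \<kappa>2 b r = 0)"
    using deriv_zero_iff_constant_on_interval[OF open_I assms has_real_derivative_mass_deriv[of _ q \<kappa>1 \<kappa>2]]
    by blast
  also have "\<dots> \<longleftrightarrow> (\<exists>M. \<forall>r\<in>I. mass_function q \<kappa>1 \<kappa>2 b r = M)"
    by (rule deriv_zero_iff_constant_on_interval[OF open_I assms has_real_derivative_mass_function])
  finally show ?thesis .
qed

end

theorem proposition14:
  fixes b :: "real \<Rightarrow> real" and I :: "real set"
    and \<kappa>1 \<kappa>2 q Lam lam :: real
  assumes I_open: "open I" and I_interval: "is_interval I" and I_ne: "I \<noteq> {}"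
    and I_pos: "I \<subseteq> {0<..}"
    and b_smooth: "\<forall>n. \<forall>r\<in>I. ((deriv ^^ n) b) differentiable (at r)"
    and b_pos: "\<forall>r\<in>I. b r > 0"
    and Lam_def: "Lam = - \<kappa>1" and lam_def: "lam = - \<kappa>2"
  shows "(\<forall>x::real^4. x$1 \<in> I \<and> 0 < x$2 \<and> x$2 < pi \<longrightarrow>
            (\<forall>k l. ricci (sss_metric b) x k l
                     - 1/2 * scalar_curv (sss_metric b) x * sss_metric b x $ k $ l
                   = Ttens q b x k l + Ktens \<kappa>1 \<kappa>2 b x k l))
     \<longleftrightarrow> (\<exists>M::real. \<forall>r\<in>I.
            (b r)\<^sup>2 = 1 - 2 * M / r - Lam / 3 * r\<^sup>2 + q\<^sup>2 / r\<^sup>2 - lam / 5 * r ^ 4)"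
proof -
  interpret static_spherical b I
    using I_open I_pos b_pos spec[OF b_smooth, of 0] spec[OF b_smooth, of 1]
    by unfold_locales (auto simp: DERIV_deriv_iff_real_differentiable)
  have "mass_function q \<kappa>1 \<kappa>2 b r = M \<longleftrightarrow>
      (b r)\<^sup>2 = 1 - 2 * M / r - Lam / 3 * r\<^sup>2 + q\<^sup>2 / r\<^sup>2 - lam / 5 * r ^ 4" if "r \<in> I" for r M
  proof -
    have formula: "1 - 2 * M / r - Lam / 3 * r\<^sup>2 + q\<^sup>2 / r\<^sup>2 - lam / 5 * r ^ 4
        = 1 - 2 * M / r + \<kappa>1 / 3 * r\<^sup>2 + q\<^sup>2 / r\<^sup>2 + \<kappa>2 / 5 * r ^ 4"
      by (simp add: Lam_def lam_def)
    have "r \<noteq> 0" using that I_pos by auto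
    then show ?thesis unfolding formula by (rule mass_function_eq_iff)
  qed
  then show ?thesis
    unfolding field_equations_at_def[symmetric] field_equations_iff_mass_constant[OF I_interval]
    by simp
qed

end
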